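(* Let $J,M$ be natural numbers. Let $\mathcal N\subset\mathbb N$ be a subset such that for each $m\in\mathbb N$ there is some $n\in\mathcal N$ divisible by $m$. Let $a_{j,i}\in\mathbb Z$ and $b_j\in\mathbb Z$ for $(j,i)\in\{1,\ldots,J\}\times\{1,\ldots,M\}$ be fixed integers. Suppose that for each $n\in\mathcal N$ there are integers $e_{i,n}$, $i\in\{1,\ldots,M\}$, such that $n$ divides $b_j-\sum_{i=1}^M a_{j,i}e_{i,n}$ for each $j\in\{1,\ldots,J\}$. Then there is some $n_0\in\mathcal N$ with the following property: for each $n\in\mathcal N$ divisible by $n_0$, there are integers $e'_{i,n}$, $i\in\{1,\ldots,M\}$, such that $\frac{n}{n_0}$ divides $e_{i,n}-e'_{i,n}$ for each $i$ and $b_j=\sum_{i=1}^M a_{j,i}e'_{i,n}$ for each $j$. *)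

theory Defs
  imports Main
begin

end

theory Submission imports Defs begin

text \<open>
  For an integer matrix \<open>A\<close> there are \<open>d \<ge> 1\<close> and an integer matrix \<open>P\<close> with \<open>A P = 0\<close>
  such that \<open>P z \<equiv> d z (mod m)\<close> whenever \<open>A z \<equiv> 0 (mod m)\<close>; such a pair is built one row
  at a time. Hence every \<open>z\<close> with \<open>A z \<equiv> 0 (mod d q)\<close> is congruent modulo \<open>q\<close> to a vector
  \<open>P z / d\<close> of the kernel. Applied to the homogenised system \<open>(A | -b)\<close>, solvability modulo
  every \<open>m\<close> yields a kernel vector with odd last coordinate \<open>c\<close> and another one whose last
  coordinate is \<open>1\<close> modulo \<open>c\<close>; a combination of the two has last coordinate \<open>1\<close>, i.e. gives
  an exact solution \<open>x\<^sub>0\<close>. Applied to \<open>e\<^sub>n - x\<^sub>0\<close> with \<open>d\<close> dividing \<open>n\<^sub>0\<close>, it gives the required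
  exact solution close to \<open>e\<^sub>n\<close>.
\<close>

definition dotp :: "nat \<Rightarrow> (nat \<Rightarrow> int) \<Rightarrow> (nat \<Rightarrow> int) \<Rightarrow> int" where
  "dotp M r z = (\<Sum>k=1..M. r k * z k)"

definition mat_apply :: "nat \<Rightarrow> (nat \<Rightarrow> nat \<Rightarrow> int) \<Rightarrow> (nat \<Rightarrow> int) \<Rightarrow> nat \<Rightarrow> int" where
  "mat_apply M P z i = dotp M (P i) z"

definition id_mat :: "nat \<Rightarrow> nat \<Rightarrow> int" where
  "id_mat i k = (if i = k then 1 else 0)"

lemma dotp_cong: "(\<And>k. k \<in> {1..M} \<Longrightarrow> z k = w k) \<Longrightarrow> dotp M r z = dotp M r w"
  unfolding dotp_def by (rule sum.cong) auto

lemma dotp_add: "dotp M r (\<lambda>k. z k + w k) = dotp M r z + dotp M r w"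
  unfolding dotp_def by (simp add: algebra_simps sum.distrib)

lemma dotp_diff: "dotp M r (\<lambda>k. z k - w k) = dotp M r z - dotp M r w"
  unfolding dotp_def by (simp add: algebra_simps sum_subtractf)

lemma dotp_cmult: "dotp M r (\<lambda>k. c * z k) = c * dotp M r z"
  unfolding dotp_def by (simp add: algebra_simps sum_distrib_left)

lemma dvd_dotp: "(\<And>k. k \<in> {1..M} \<Longrightarrow> m dvd z k) \<Longrightarrow> m dvd dotp M r z"
  unfolding dotp_def by (rule dvd_sum) auto

lemma dotp_mat_apply:
  "dotp M r (mat_apply M P z) = dotp M (\<lambda>k. dotp M r (\<lambda>i. P i k)) z"
  unfolding mat_apply_def dotp_def
  by (simp add: sum_distrib_left sum_distrib_right mult.assoc) (rule sum.swap)

lemma mat_apply_mat_apply: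
  "mat_apply M P (mat_apply M Q z) = mat_apply M (\<lambda>i k. dotp M (P i) (\<lambda>l. Q l k)) z"
  unfolding mat_apply_def[of M P] by (rule ext) (simp add: dotp_mat_apply mat_apply_def)

lemma mat_apply_id_mat: "i \<in> {1..M} \<Longrightarrow> mat_apply M id_mat z i = z i"
proof -
  assume i: "i \<in> {1..M}"
  have "mat_apply M id_mat z i = (\<Sum>k=1..M. if i = k then z k else 0)"
    unfolding mat_apply_def dotp_def id_mat_def by (rule sum.cong) auto
  then show ?thesis using i by simp
qed

definition kernel_retraction ::
    "nat \<Rightarrow> nat \<Rightarrow> (nat \<Rightarrow> nat \<Rightarrow> int) \<Rightarrow> int \<Rightarrow> (nat \<Rightarrow> nat \<Rightarrow> int) \<Rightarrow> bool" where
  "kernel_retraction J M a d P \<longleftrightarrow> d \<ge> 1 \<and>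
     (\<forall>j\<in>{1..J}. \<forall>z. dotp M (a j) (mat_apply M P z) = 0) \<and>
     (\<forall>m z. (\<forall>j\<in>{1..J}. m dvd dotp M (a j) z) \<longrightarrow>
        (\<forall>i\<in>{1..M}. m dvd d * z i - mat_apply M P z i))"

lemma kernel_retraction_scale_ge1: "kernel_retraction J M a d P \<Longrightarrow> d \<ge> 1"
  unfolding kernel_retraction_def by simp

lemma kernel_retraction_no_rows: "kernel_retraction 0 M a 1 id_mat"
  unfolding kernel_retraction_def by (simp add: mat_apply_id_mat)

text \<open>For a single row \<open>s\<close>, \<open>P z = e z - (s \<bullet> z) c\<close> with \<open>s \<bullet> c = e\<close>; if \<open>s \<noteq> 0\<close> one
  takes \<open>c\<close> supported on a coordinate \<open>i\<^sub>0\<close> with \<open>s i\<^sub>0 \<noteq> 0\<close> and \<open>e = \<bar>s i\<^sub>0\<bar>\<close>.\<close>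

lemma kernel_retraction_one_row: "\<exists>e p. kernel_retraction 1 M (\<lambda>_. s) e p"
proof -
  obtain e c where e: "e \<ge> 1" and ortho: "\<And>z. (e - dotp M s c) * dotp M s z = 0"
  proof (cases "\<forall>k\<in>{1..M}. s k = 0")
    case True
    then have "dotp M s z = 0" for z unfolding dotp_def by simp
    then show ?thesis using that[of 1 "\<lambda>_. 0"] by simp
  next
    case False
    then obtain i0 where i0: "i0 \<in> {1..M}" "s i0 \<noteq> 0" by auto
    have "dotp M s (\<lambda>i. if i = i0 then sgn (s i0) else 0) = (\<Sum>i=1..M. if i = i0 then \<bar>s i0\<bar> else 0)"
      unfolding dotp_def by (rule sum.cong) (auto simp: abs_sgn mult.commute)
    also have "\<dots> = \<bar>s i0\<bar>" using i0 by simp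
    finally show ?thesis using that[of "\<bar>s i0\<bar>" "\<lambda>i. if i = i0 then sgn (s i0) else 0"] i0
      by simp
  qed
  define p where "p = (\<lambda>i k. e * id_mat i k - c i * s k)"
  have p_apply: "mat_apply M p z i = e * z i - c i * dotp M s z" if "i \<in> {1..M}" for z i
  proof -
    have "mat_apply M p z i = e * mat_apply M id_mat z i - c i * dotp M s z"
      unfolding mat_apply_def p_def dotp_def
      by (simp add: algebra_simps sum_subtractf sum_distrib_left)
    then show ?thesis using that by (simp add: mat_apply_id_mat)
  qed
  have "dotp M s (mat_apply M p z) = (e - dotp M s c) * dotp M s z" for z
  proof -
    have "dotp M s (mat_apply M p z) = dotp M s (\<lambda>i. e * z i - dotp M s z * c i)"
      by (rule dotp_cong) (simp add: p_apply)
    also have "\<dots> = e * dotp M s z - dotp M s z * dotp M s c"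
      unfolding dotp_diff dotp_cmult ..
    finally show ?thesis by (simp add: algebra_simps)
  qed
  then have "kernel_retraction 1 M (\<lambda>_. s) e p"
    unfolding kernel_retraction_def using e ortho by (simp add: p_apply)
  then show ?thesis by blast
qed

text \<open>Adding a row \<open>r\<close>: with \<open>(d', P')\<close> for the old rows, take a retraction \<open>(e, p)\<close> for the
  single row \<open>r P'\<close>; then \<open>(e d', P' p)\<close> works, because
  \<open>e d' z - P' p z = e (d' z - P' z) + P' (e z - p z)\<close>.\<close>

lemma kernel_retraction_add_row:
  assumes old: "kernel_retraction J M a d' P'"
  shows "\<exists>d P. kernel_retraction (Suc J) M a d P"
proof -
  define s where "s = (\<lambda>k. dotp M (a (Suc J)) (\<lambda>i. P' i k))"
  obtain e p where new: "kernel_retraction 1 M (\<lambda>_. s) e p"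
    using kernel_retraction_one_row by blast
  define P where "P = (\<lambda>i k. dotp M (P' i) (\<lambda>l. p l k))"
  have P_apply: "mat_apply M P z = mat_apply M P' (mat_apply M p z)" for z
    unfolding P_def by (simp add: mat_apply_mat_apply)
  have s_dotp: "dotp M (a (Suc J)) (mat_apply M P' w) = dotp M s w" for w
    unfolding s_def by (simp add: dotp_mat_apply)
  have d': "d' \<ge> 1" and old_ker: "\<And>j z. j \<in> {1..J} \<Longrightarrow> dotp M (a j) (mat_apply M P' z) = 0"
    and old_cong: "\<And>m z i. \<forall>j\<in>{1..J}. m dvd dotp M (a j) z \<Longrightarrow> i \<in> {1..M} \<Longrightarrow>
                   m dvd d' * z i - mat_apply M P' z i"
    using old unfolding kernel_retraction_def by auto
  have e: "e \<ge> 1" and new_ker: "\<And>z. dotp M s (mat_apply M p z) = 0"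
    and new_cong: "\<And>m z i. m dvd dotp M s z \<Longrightarrow> i \<in> {1..M} \<Longrightarrow> m dvd e * z i - mat_apply M p z i"
    using new unfolding kernel_retraction_def by auto
  have "dotp M (a j) (mat_apply M P z) = 0" if "j \<in> {1..Suc J}" for j z
    using that old_ker new_ker s_dotp by (cases "j = Suc J") (auto simp: P_apply)
  moreover have "m dvd (e * d') * z i - mat_apply M P z i"
    if rows: "\<forall>j\<in>{1..Suc J}. m dvd dotp M (a j) z" and i: "i \<in> {1..M}" for m z i
  proof -
    have near_old: "m dvd d' * z k - mat_apply M P' z k" if "k \<in> {1..M}" for k
      using old_cong rows that by auto
    have "dotp M s z = d' * dotp M (a (Suc J)) z
                        - dotp M (a (Suc J)) (\<lambda>k. d' * z k - mat_apply M P' z k)"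
      by (simp add: dotp_diff dotp_cmult s_dotp)
    moreover have "m dvd dotp M (a (Suc J)) (\<lambda>k. d' * z k - mat_apply M P' z k)"
      using near_old by (intro dvd_dotp) auto
    ultimately have "m dvd dotp M s z" using rows by simp
    then have "m dvd mat_apply M P' (\<lambda>k. e * z k - mat_apply M p z k) i"
      unfolding mat_apply_def[of M P'] using new_cong by (intro dvd_dotp) auto
    moreover have "(e * d') * z i - mat_apply M P z i =
        e * (d' * z i - mat_apply M P' z i) + mat_apply M P' (\<lambda>k. e * z k - mat_apply M p z k) i"
      unfolding P_apply mat_apply_def[of M P'] by (simp add: dotp_diff dotp_cmult algebra_simps)
    ultimately show ?thesis using near_old[OF i] by simp
  qed
  moreover have "e * d' \<ge> 1" using e d' by (smt (verit) mult_pos_pos)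
  ultimately have "kernel_retraction (Suc J) M a (e * d') P"
    unfolding kernel_retraction_def by blast
  then show ?thesis by blast
qed

lemma kernel_retraction_exists: "\<exists>d P. kernel_retraction J M a d P"
proof (induction J)
  case 0
  show ?case using kernel_retraction_no_rows by blast
next
  case (Suc J)
  then show ?case using kernel_retraction_add_row by blast
qed

lemma kernel_vector_near:
  assumes retr: "kernel_retraction J M a d P"
    and rows: "\<forall>j\<in>{1..J}. d * q dvd dotp M (a j) z"
  shows "\<exists>k. (\<forall>j\<in>{1..J}. dotp M (a j) k = 0) \<and> (\<forall>i\<in>{1..M}. q dvd z i - k i)"
proof -
  have d: "d \<ge> 1" and ker: "\<And>j. j \<in> {1..J} \<Longrightarrow> dotp M (a j) (mat_apply M P z) = 0"
    and near: "\<And>i. i \<in> {1..M} \<Longrightarrow> d * q dvd d * z i - mat_apply M P z i"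
    using retr rows unfolding kernel_retraction_def by auto
  define k where "k = (\<lambda>i. mat_apply M P z i div d)"
  have Pz: "mat_apply M P z i = d * k i" if "i \<in> {1..M}" for i
  proof -
    have "d dvd d * z i - mat_apply M P z i"
      using near[OF that] by (rule dvd_mult_left)
    then have "d dvd mat_apply M P z i" by (metis dvd_diff_right_iff dvdI)
    then show ?thesis unfolding k_def by simp
  qed
  have "dotp M (a j) k = 0" if "j \<in> {1..J}" for j
  proof -
    have "d * dotp M (a j) k = dotp M (a j) (\<lambda>i. d * k i)"
      by (rule dotp_cmult[symmetric])
    also have "\<dots> = dotp M (a j) (mat_apply M P z)"
      by (rule dotp_cong) (simp add: Pz)
    finally have "d * dotp M (a j) k = dotp M (a j) (mat_apply M P z)" .
    then show ?thesis using ker[OF that] d by simp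
  qed
  moreover have "q dvd z i - k i" if "i \<in> {1..M}" for i
    using near[OF that] d by (simp add: Pz[OF that] right_diff_distrib[symmetric])
  ultimately show ?thesis by blast
qed

text \<open>The system is homogenised by the extra column \<open>M + 1\<close> carrying \<open>-b\<close>; a kernel vector
  with last coordinate \<open>1\<close> is a solution.\<close>

lemma solvable_if_solvable_mod_all:
  fixes a :: "nat \<Rightarrow> nat \<Rightarrow> int" and b :: "nat \<Rightarrow> int"
  assumes mod_sol: "\<And>m. m \<ge> 1 \<Longrightarrow> \<exists>x. \<forall>j\<in>{1..J}. m dvd b j - dotp M (a j) x"
  shows "\<exists>x. \<forall>j\<in>{1..J}. dotp M (a j) x = b j"
proof -
  define a' where "a' = (\<lambda>j i. if i = Suc M then - b j else a j i)"
  have dotp_a': "dotp (Suc M) (a' j) z = dotp M (a j) z - b j * z (Suc M)" for j z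
  proof -
    have "dotp M (a' j) z = dotp M (a j) z"
      unfolding dotp_def a'_def by (rule sum.cong) auto
    then show ?thesis unfolding dotp_def a'_def by simp
  qed
  obtain d P where retr: "kernel_retraction J (Suc M) a' d P"
    using kernel_retraction_exists by blast
  have d: "d \<ge> 1" using retr by (rule kernel_retraction_scale_ge1)
  have last_coord: "\<exists>k. (\<forall>j\<in>{1..J}. dotp (Suc M) (a' j) k = 0) \<and> m dvd 1 - k (Suc M)"
    if m: "m \<ge> 1" for m
  proof -
    have "d * m \<ge> 1" using d m by (smt (verit) mult_pos_pos)
    then obtain x where x: "\<forall>j\<in>{1..J}. d * m dvd b j - dotp M (a j) x"
      using mod_sol by blast
    define z where "z = (\<lambda>i. if i = Suc M then 1 else x i)"
    have "dotp (Suc M) (a' j) z = dotp M (a j) x - b j" for j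
      using dotp_cong[of M z x "a j"] by (simp add: dotp_a' z_def)
    then have "\<forall>j\<in>{1..J}. d * m dvd dotp (Suc M) (a' j) z"
      using x by (simp add: dvd_diff_commute)
    then obtain k where k: "\<forall>j\<in>{1..J}. dotp (Suc M) (a' j) k = 0" "\<forall>i\<in>{1..Suc M}. m dvd z i - k i"
      using kernel_vector_near[OF retr] by blast
    moreover have "m dvd 1 - k (Suc M)" using bspec[OF k(2), of "Suc M"] by (simp add: z_def)
    ultimately show ?thesis by blast
  qed
  obtain k1 where k1: "\<forall>j\<in>{1..J}. dotp (Suc M) (a' j) k1 = 0" "2 dvd 1 - k1 (Suc M)"
    using last_coord[of 2] by auto
  then have "\<bar>k1 (Suc M)\<bar> \<ge> 1" by (cases "k1 (Suc M) = 0") auto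
  then obtain k2 where k2: "\<forall>j\<in>{1..J}. dotp (Suc M) (a' j) k2 = 0"
    "k1 (Suc M) dvd 1 - k2 (Suc M)"
    using last_coord by fastforce
  then obtain u where u: "u * k1 (Suc M) + k2 (Suc M) = 1"
    by (metis dvd_def eq_diff_eq mult.commute)
  define x where "x = (\<lambda>i. u * k1 i + k2 i)"
  have "dotp M (a j) x = b j" if "j \<in> {1..J}" for j
  proof -
    have "dotp (Suc M) (a' j) x = 0"
      using k1(1) k2(1) that unfolding x_def by (simp add: dotp_add dotp_cmult)
    then show ?thesis using u by (simp add: dotp_a' x_def)
  qed
  then show ?thesis by blast
qed

lemma exact_solution_near:
  assumes retr: "kernel_retraction J M a d P"
    and x0: "\<forall>j\<in>{1..J}. dotp M (a j) x0 = b j"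
    and z: "\<forall>j\<in>{1..J}. d * q dvd b j - dotp M (a j) z"
  shows "\<exists>x. (\<forall>j\<in>{1..J}. dotp M (a j) x = b j) \<and> (\<forall>i\<in>{1..M}. q dvd z i - x i)"
proof -
  have "\<forall>j\<in>{1..J}. d * q dvd dotp M (a j) (\<lambda>i. z i - x0 i)"
    using z x0 by (simp add: dotp_diff dvd_diff_commute)
  then obtain k where k: "\<forall>j\<in>{1..J}. dotp M (a j) k = 0" "\<forall>i\<in>{1..M}. q dvd z i - x0 i - k i"
    using kernel_vector_near[OF retr] by blast
  have "\<forall>j\<in>{1..J}. dotp M (a j) (\<lambda>i. x0 i + k i) = b j"
    using x0 k(1) by (simp add: dotp_add)
  moreover have "\<forall>i\<in>{1..M}. q dvd z i - (x0 i + k i)"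
    using k(2) by (simp add: diff_diff_eq)
  ultimately show ?thesis by blast
qed

theorem lemma10:
  fixes J M :: nat
    and N :: "nat set"
    and a :: "nat \<Rightarrow> nat \<Rightarrow> int"
    and b :: "nat \<Rightarrow> int"
    and e :: "nat \<Rightarrow> nat \<Rightarrow> int"
  assumes N_pos: "N \<subseteq> {1..}"
    and N_cofinal: "\<And>m. m \<ge> 1 \<Longrightarrow> \<exists>n\<in>N. m dvd n"
    and sol_mod: "\<And>n j. n \<in> N \<Longrightarrow> j \<in> {1..J} \<Longrightarrow>
        int n dvd (b j - (\<Sum>i=1..M. a j i * e i n))"
  shows "\<exists>n0\<in>N. \<forall>n\<in>N. n0 dvd n \<longrightarrow>
           (\<exists>e' :: nat \<Rightarrow> int.
              (\<forall>i\<in>{1..M}. int (n div n0) dvd (e i n - e' i)) \<and>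
              (\<forall>j\<in>{1..J}. b j = (\<Sum>i=1..M. a j i * e' i)))"
proof -
  have sol: "\<forall>j\<in>{1..J}. int n dvd b j - dotp M (a j) (\<lambda>i. e i n)" if "n \<in> N" for n
    using sol_mod[OF that] unfolding dotp_def by blast
  have "\<exists>x. \<forall>j\<in>{1..J}. m dvd b j - dotp M (a j) x" if "m \<ge> 1" for m :: int
  proof -
    have "nat m \<ge> 1" using that by simp
    then obtain n where n: "n \<in> N" "m dvd int n" using N_cofinal that by force
    then show ?thesis using sol[OF n(1)] dvd_trans by blast
  qed
  then obtain x0 where x0: "\<forall>j\<in>{1..J}. dotp M (a j) x0 = b j"
    using solvable_if_solvable_mod_all by blast
  obtain d P where retr: "kernel_retraction J M a d P"
    using kernel_retraction_exists by blast
  then have d: "d \<ge> 1" by (rule kernel_retraction_scale_ge1)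
  then have "nat d \<ge> 1" by simp
  then obtain n0 where n0: "n0 \<in> N" "nat d dvd n0" using N_cofinal by blast
  then obtain s where s: "n0 = nat d * s" by blast
  have "\<exists>e'. (\<forall>i\<in>{1..M}. int (n div n0) dvd e i n - e' i) \<and> (\<forall>j\<in>{1..J}. b j = dotp M (a j) e')"
    if n: "n \<in> N" "n0 dvd n" for n
  proof -
    obtain t where t: "n = n0 * t" using n(2) by blast
    have "n0 \<noteq> 0" using N_pos n0(1) by auto
    then have "int (n div n0) dvd int (s * t)" using t by simp
    moreover have "int n = d * int (s * t)" using d s t by simp
    ultimately show ?thesis
      using exact_solution_near[OF retr x0, of "int (s * t)" "\<lambda>i. e i n"] sol[OF n(1)]
      by (metis dvd_trans)
  qed
  then show ?thesis using n0(1) unfolding dotp_def by blast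
qed

end
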